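(* The maximal Lie algebra of point symmetries (maximal invariance algebra in the sense of Lie) of the partial differential equation $$u_t+(u_x+u_{xx})^2=0$$ for $u=u(t,x)$ is five-dimensional, with basis $$X_1=-\partial_x,\quad X_2=-e^{-x}\partial_u,\quad X_3=\partial_t,\quad X_4=\partial_u,\quad X_5=t\partial_t-u\partial_u,$$ whose only non-zero commutators are $[X_1,X_2]=X_2$, $[X_2,X_5]=-X_2$, $[X_3,X_5]=X_3$, $[X_4,X_5]=-X_4$. *)

theory Defs
  imports "HOL-Analysis.Analysis"
begin

text \<open>Point vector fields Q = tau d_t + xi d_x + eta d_u on R^3 with coordinates (t,x,u).\<close>

type_synonym fn3 = "real \<Rightarrow> real \<Rightarrow> real \<Rightarrow> real"
type_synonym fn2 = "real \<Rightarrow> real \<Rightarrow> real"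

datatype vf = VF (tau: fn3) (xi: fn3) (eta: fn3)

definition pt :: "fn3 \<Rightarrow> fn3" where "pt f = (\<lambda>t x u. deriv (\<lambda>s. f s x u) t)"
definition px :: "fn3 \<Rightarrow> fn3" where "px f = (\<lambda>t x u. deriv (\<lambda>s. f t s u) x)"
definition pu :: "fn3 \<Rightarrow> fn3" where "pu f = (\<lambda>t x u. deriv (\<lambda>s. f t x s) u)"

definition dt :: "fn2 \<Rightarrow> fn2" where "dt U = (\<lambda>t x. deriv (\<lambda>s. U s x) t)"
definition dx :: "fn2 \<Rightarrow> fn2" where "dx U = (\<lambda>t x. deriv (\<lambda>s. U t s) x)"

inductive_set partials3 :: "fn3 \<Rightarrow> fn3 set" for f where
  "f \<in> partials3 f"
| "g \<in> partials3 f \<Longrightarrow> pt g \<in> partials3 f"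
| "g \<in> partials3 f \<Longrightarrow> px g \<in> partials3 f"
| "g \<in> partials3 f \<Longrightarrow> pu g \<in> partials3 f"

inductive_set partials2 :: "fn2 \<Rightarrow> fn2 set" for U where
  "U \<in> partials2 U"
| "g \<in> partials2 U \<Longrightarrow> dt g \<in> partials2 U"
| "g \<in> partials2 U \<Longrightarrow> dx g \<in> partials2 U"

definition smooth3 :: "fn3 \<Rightarrow> bool" where
  "smooth3 f \<longleftrightarrow> (\<forall>g \<in> partials3 f.
      continuous_on UNIV (\<lambda>(t,x,u). g t x u) \<and>
      (\<forall>t x u. (\<lambda>s. g s x u) differentiable (at t) \<and>
               (\<lambda>s. g t s u) differentiable (at x) \<and>
               (\<lambda>s. g t x s) differentiable (at u)))"

definition smooth2 :: "fn2 \<Rightarrow> bool" where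
  "smooth2 U \<longleftrightarrow> (\<forall>g \<in> partials2 U.
      continuous_on UNIV (\<lambda>(t,x). g t x) \<and>
      (\<forall>t x. (\<lambda>s. g s x) differentiable (at t) \<and> (\<lambda>s. g t s) differentiable (at x)))"

definition eqn :: "fn2 \<Rightarrow> real \<Rightarrow> real \<Rightarrow> bool" where
  "eqn U t x \<longleftrightarrow> dt U t x + (dx U t x + dx (dx U) t x)^2 = 0"

definition charQ :: "vf \<Rightarrow> fn2 \<Rightarrow> fn2" where
  "charQ Q U = (\<lambda>t x. eta Q t x (U t x) - tau Q t x (U t x) * dt U t x
                       - xi Q t x (U t x) * dx U t x)"

text \<open>Coefficients of the second prolongation, evaluated along the 2-jet of U
  (total derivatives D_t, D_x evaluated on the graph of U).\<close>
definition etaT :: "vf \<Rightarrow> fn2 \<Rightarrow> fn2" where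
  "etaT Q U = (\<lambda>t x. dt (charQ Q U) t x + tau Q t x (U t x) * dt (dt U) t x
                      + xi Q t x (U t x) * dt (dx U) t x)"
definition etaX :: "vf \<Rightarrow> fn2 \<Rightarrow> fn2" where
  "etaX Q U = (\<lambda>t x. dx (charQ Q U) t x + tau Q t x (U t x) * dx (dt U) t x
                      + xi Q t x (U t x) * dx (dx U) t x)"
definition etaXX :: "vf \<Rightarrow> fn2 \<Rightarrow> fn2" where
  "etaXX Q U = (\<lambda>t x. dx (dx (charQ Q U)) t x + tau Q t x (U t x) * dx (dx (dt U)) t x
                      + xi Q t x (U t x) * dx (dx (dx U)) t x)"

text \<open>pr^(2) Q applied to F = u_t + (u_x+u_xx)^2, evaluated along U.\<close>
definition prolF :: "vf \<Rightarrow> fn2 \<Rightarrow> fn2" where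
  "prolF Q U = (\<lambda>t x. etaT Q U t x
      + 2 * (dx U t x + dx (dx U) t x) * (etaX Q U t x + etaXX Q U t x))"

text \<open>Lie point symmetry (infinitesimal invariance criterion): smooth Q with
  pr^(2) Q F = 0 on the solution manifold F = 0 of the jet space; every 2-jet point
  is realised by a smooth U, so we quantify over smooth U and points.\<close>
definition is_sym :: "vf \<Rightarrow> bool" where
  "is_sym Q \<longleftrightarrow> smooth3 (tau Q) \<and> smooth3 (xi Q) \<and> smooth3 (eta Q) \<and>
     (\<forall>U. smooth2 U \<longrightarrow> (\<forall>t x. eqn U t x \<longrightarrow> prolF Q U t x = 0))"

definition vzero :: vf where "vzero = VF (\<lambda>_ _ _. 0) (\<lambda>_ _ _. 0) (\<lambda>_ _ _. 0)"
definition vneg :: "vf \<Rightarrow> vf" where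
  "vneg Q = VF (\<lambda>t x u. - tau Q t x u) (\<lambda>t x u. - xi Q t x u) (\<lambda>t x u. - eta Q t x u)"

definition vapp :: "vf \<Rightarrow> fn3 \<Rightarrow> fn3" where
  "vapp Q f = (\<lambda>t x u. tau Q t x u * pt f t x u + xi Q t x u * px f t x u
                      + eta Q t x u * pu f t x u)"

definition bracket :: "vf \<Rightarrow> vf \<Rightarrow> vf" where
  "bracket P Q = VF (\<lambda>t x u. vapp P (tau Q) t x u - vapp Q (tau P) t x u)
                    (\<lambda>t x u. vapp P (xi Q) t x u - vapp Q (xi P) t x u)
                    (\<lambda>t x u. vapp P (eta Q) t x u - vapp Q (eta P) t x u)"

definition X :: "nat \<Rightarrow> vf" where
  "X i = (if i = 1 then VF (\<lambda>_ _ _. 0) (\<lambda>_ _ _. -1) (\<lambda>_ _ _. 0)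
     else if i = 2 then VF (\<lambda>_ _ _. 0) (\<lambda>_ _ _. 0) (\<lambda>t x u. - exp (- x))
     else if i = 3 then VF (\<lambda>_ _ _. 1) (\<lambda>_ _ _. 0) (\<lambda>_ _ _. 0)
     else if i = 4 then VF (\<lambda>_ _ _. 0) (\<lambda>_ _ _. 0) (\<lambda>_ _ _. 1)
     else if i = 5 then VF (\<lambda>t x u. t) (\<lambda>_ _ _. 0) (\<lambda>t x u. - u)
     else vzero)"

definition lincomb :: "(nat \<Rightarrow> real) \<Rightarrow> vf" where
  "lincomb c = VF (\<lambda>t x u. \<Sum>i=1..5. c i * tau (X i) t x u)
                  (\<lambda>t x u. \<Sum>i=1..5. c i * xi (X i) t x u)
                  (\<lambda>t x u. \<Sum>i=1..5. c i * eta (X i) t x u)"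

end

theory Submission
  imports Defs
begin

text \<open>
  For a combination of \<open>X\<^sub>1, \<dots>, X\<^sub>5\<close> the second prolongation applied to
  \<open>F = u\<^sub>t + (u\<^sub>x + u\<^sub>x\<^sub>x)\<^sup>2\<close> equals \<open>-2 c\<^sub>5 F\<close>, so it vanishes on solutions.
  Conversely, quadratic polynomials in \<open>(t, x)\<close> realise every second-order jet with
  \<open>u\<^sub>t = -(u\<^sub>x + u\<^sub>x\<^sub>x)\<^sup>2\<close>.  Along them \<open>pr\<^sup>(\<^sup>2\<^sup>) Q F\<close> is a polynomial in
  \<open>u\<^sub>x, u\<^sub>x\<^sub>x, u\<^sub>t\<^sub>x\<close> whose coefficients are partial derivatives of the coefficients
  of \<open>Q\<close>; its vanishing gives the determining equations.  Their smooth solutions are found by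
  integrating ordinary differential equations: \<open>\<tau>\<close> is affine in \<open>t\<close>, \<open>\<xi>\<close> is constant,
  and \<open>\<eta> = a + b e\<^sup>-\<^sup>x - k u\<close> with \<open>k = \<tau>\<^sub>t\<close>.
\<close>

section \<open>Calculus of smooth functions of \<open>(t, x, u)\<close>\<close>

lemma DERIV_along_curve:
  fixes F Fy :: "real \<Rightarrow> real \<Rightarrow> real"
  assumes Fx: "((\<lambda>s. F s y0) has_real_derivative A) (at s0)"
    and Fy: "\<And>s y. ((\<lambda>y. F s y) has_real_derivative Fy s y) (at y)"
    and Fy_cont: "continuous_on UNIV (\<lambda>(s, y). Fy s y)"
    and c: "(c has_real_derivative C) (at s0)" "c s0 = y0"
  shows "((\<lambda>s. F s (c s)) has_real_derivative A + Fy s0 y0 * C) (at s0)"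
proof -
  let ?F' = "\<lambda>(tx, ty). tx * A + blinfun_mult_right (Fy s0 y0) ty"
  have "((\<lambda>(x, y). F x y) has_derivative ?F') (at (s0, y0) within UNIV \<times> UNIV)"
  proof (rule has_derivative_partialsI)
    show "((\<lambda>x. F x y0) has_derivative (\<lambda>tx. tx * A)) (at s0 within UNIV)"
      using Fx by (simp add: has_field_derivative_def mult_commute_abs)
    show "((\<lambda>y. F x y) has_derivative blinfun_apply (blinfun_mult_right (Fy x y))) (at y within UNIV)"
      for x y
      using Fy[of x y] by (simp add: has_field_derivative_def mult.commute)
    have "continuous (at (s0, y0)) (\<lambda>(x, y). Fy x y)"
      using Fy_cont by (simp add: continuous_on_eq_continuous_at)
    then show "continuous (at (s0, y0) within UNIV \<times> UNIV) (\<lambda>(x, y). blinfun_mult_right (Fy x y))"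
      using bounded_linear.continuous[OF bounded_linear_blinfun_mult_right]
      by (simp add: case_prod_unfold)
  qed auto
  then have "((\<lambda>(x, y). F x y) has_derivative ?F') (at (s0, c s0))"
    using c(2) by simp
  moreover have "((\<lambda>s. (s, c s)) has_derivative (\<lambda>h. (h, h * C))) (at s0)"
    using c(1) by (auto intro!: derivative_eq_intros simp: has_field_derivative_def mult.commute)
  ultimately have "((\<lambda>(x, y). F x y) \<circ> (\<lambda>s. (s, c s)) has_derivative ?F' \<circ> (\<lambda>h. (h, h * C))) (at s0)"
    by (rule diff_chain_at[rotated])
  moreover have "?F' \<circ> (\<lambda>h. (h, h * C)) = (\<lambda>h. (A + Fy s0 y0 * C) * h)"
    by (auto simp: fun_eq_iff algebra_simps)
  ultimately show ?thesis
    by (simp add: has_field_derivative_def o_def)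
qed

lemma partials3_trans: "h \<in> partials3 g \<Longrightarrow> g \<in> partials3 f \<Longrightarrow> h \<in> partials3 f"
  by (induction h rule: partials3.induct) (auto intro: partials3.intros)

lemma smooth3_partials3: "smooth3 f \<Longrightarrow> g \<in> partials3 f \<Longrightarrow> smooth3 g"
  unfolding smooth3_def using partials3_trans by blast

lemma smooth3_px: "smooth3 f \<Longrightarrow> smooth3 (px f)"
  and smooth3_pu: "smooth3 f \<Longrightarrow> smooth3 (pu f)"
  by (auto intro: smooth3_partials3 partials3.intros)

lemma smooth3_continuous: "smooth3 f \<Longrightarrow> continuous_on UNIV (\<lambda>(t, x, u). f t x u)"
  unfolding smooth3_def by (auto intro: partials3.intros)

lemma DERIV_pt: "smooth3 f \<Longrightarrow> ((\<lambda>s. f s x u) has_real_derivative pt f t x u) (at t)"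
  and DERIV_px: "smooth3 f \<Longrightarrow> ((\<lambda>s. f t s u) has_real_derivative px f t x u) (at x)"
  and DERIV_pu: "smooth3 f \<Longrightarrow> ((\<lambda>s. f t x s) has_real_derivative pu f t x u) (at u)"
  unfolding smooth3_def pt_def px_def pu_def using partials3.intros(1)[of f]
  by (simp_all add: DERIV_deriv_iff_real_differentiable)

lemma pt_const [simp]: "pt (\<lambda>t x u. a) = (\<lambda>t x u. 0)"
  and px_const [simp]: "px (\<lambda>t x u. a) = (\<lambda>t x u. 0)"
  and pu_const [simp]: "pu (\<lambda>t x u. a) = (\<lambda>t x u. 0)"
  by (simp_all add: pt_def px_def pu_def)

lemma DERIV_along_curve_t:
  assumes f: "smooth3 f" and c: "(c has_real_derivative C) (at t)"
  shows "((\<lambda>s. f s x (c s)) has_real_derivative pt f t x (c t) + pu f t x (c t) * C) (at t)"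
proof (rule DERIV_along_curve[where F = "\<lambda>s y. f s x y" and Fy = "\<lambda>s y. pu f s x y"])
  have "continuous_on UNIV ((\<lambda>(t, x, u). pu f t x u) \<circ> (\<lambda>(s, y). (s, x, y)))"
    by (rule continuous_on_compose[OF _ continuous_on_subset[OF smooth3_continuous[OF smooth3_pu[OF f]]]])
       (auto intro!: continuous_intros simp: case_prod_unfold)
  then show "continuous_on UNIV (\<lambda>(s, y). pu f s x y)"
    by (simp add: o_def case_prod_unfold)
qed (use f c DERIV_pt DERIV_pu in auto)

lemma DERIV_along_curve_x:
  assumes f: "smooth3 f" and c: "(c has_real_derivative C) (at x)"
  shows "((\<lambda>s. f t s (c s)) has_real_derivative px f t x (c x) + pu f t x (c x) * C) (at x)"
proof (rule DERIV_along_curve[where F = "\<lambda>s y. f t s y" and Fy = "\<lambda>s y. pu f t s y"])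
  have "continuous_on UNIV ((\<lambda>(t, x, u). pu f t x u) \<circ> (\<lambda>(s, y). (t, s, y)))"
    by (rule continuous_on_compose[OF _ continuous_on_subset[OF smooth3_continuous[OF smooth3_pu[OF f]]]])
       (auto intro!: continuous_intros simp: case_prod_unfold)
  then show "continuous_on UNIV (\<lambda>(s, y). pu f t s y)"
    by (simp add: o_def case_prod_unfold)
qed (use f c DERIV_px DERIV_pu in auto)

lemma pt_zero_imp_eq: "smooth3 f \<Longrightarrow> (\<And>s. pt f s x u = 0) \<Longrightarrow> f t x u = f t' x u"
  using DERIV_isconst_all[of "\<lambda>s. f s x u"] DERIV_pt by metis

lemma px_zero_imp_eq: "smooth3 f \<Longrightarrow> (\<And>s. px f t s u = 0) \<Longrightarrow> f t x u = f t x' u"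
  using DERIV_isconst_all[of "\<lambda>s. f t s u"] DERIV_px by metis

lemma pu_zero_imp_eq: "smooth3 f \<Longrightarrow> (\<And>s. pu f t x s = 0) \<Longrightarrow> f t x u = f t x u'"
  using DERIV_isconst_all[of "\<lambda>s. f t x s"] DERIV_pu by metis

lemma px_of_x_only:
  assumes "\<And>t x u. f t x u = f 0 x 0"
  shows "px f t x u = px f 0 x 0"
proof -
  have "(\<lambda>s. f t s u) = (\<lambda>s. f 0 s 0)"
    using assms by auto
  then show ?thesis
    by (simp add: px_def)
qed

lemma partials_affine_in_u:
  assumes "\<And>t x u. f t x u = g x + h x * u"
    and "\<And>x. (g has_real_derivative g' x) (at x)" "\<And>x. (h has_real_derivative h' x) (at x)"
  shows "px f t x u = g' x + h' x * u" and "pu f t x u = h x"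
proof -
  have "((\<lambda>s. f t s u) has_real_derivative g' x + h' x * u) (at x)"
    unfolding assms(1) by (auto intro!: derivative_eq_intros assms(2,3))
  then show "px f t x u = g' x + h' x * u"
    by (simp add: px_def DERIV_imp_deriv)
  have "((\<lambda>s. f t x s) has_real_derivative h x) (at u)"
    unfolding assms(1) by (auto intro!: derivative_eq_intros)
  then show "pu f t x u = h x"
    by (simp add: pu_def DERIV_imp_deriv)
qed

lemma DERIV_neg_self_imp_exp:
  fixes f f' :: "real \<Rightarrow> real"
  assumes f: "\<And>x. (f has_real_derivative f' x) (at x)"
    and f': "\<And>x. (f' has_real_derivative - f' x) (at x)"
  shows "f x = f 0 + f' 0 * (1 - exp (- x))"
proof -
  have "((\<lambda>x. f' x * exp x) has_real_derivative 0) (at s)" for s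
    by (auto intro!: derivative_eq_intros f')
  from DERIV_isconst_all[OF allI[OF this], of _ 0] have f'_eq: "f' s = f' 0 * exp (- s)" for s
    by (simp add: exp_minus field_simps)
  have "((\<lambda>x. f x + f' 0 * exp (- x)) has_real_derivative 0) (at s)" for s
    by (auto intro!: derivative_eq_intros f simp: f'_eq[of s])
  from DERIV_isconst_all[OF allI[OF this], of x 0] show ?thesis
    by (simp add: algebra_simps)
qed

definition smooth_vf :: "vf \<Rightarrow> bool" where
  "smooth_vf Q \<longleftrightarrow> smooth3 (tau Q) \<and> smooth3 (xi Q) \<and> smooth3 (eta Q)"

section \<open>The five generators\<close>

lemma lincomb_eq:
  "lincomb c = VF (\<lambda>t x u. c 3 + c 5 * t) (\<lambda>t x u. - c 1)
                  (\<lambda>t x u. - c 2 * exp (- x) + c 4 - c 5 * u)"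
proof -
  have "{1..5::nat} = {1, 2, 3, 4, 5}"
    by auto
  then show ?thesis
    by (simp add: lincomb_def X_def fun_eq_iff algebra_simps)
qed

lemma lincomb_eq_vzero_iff: "lincomb c = vzero \<longleftrightarrow> (\<forall>i\<in>{1..5}. c i = 0)"
proof
  assume "lincomb c = vzero"
  then have tau0: "\<And>t. c 3 + c 5 * t = 0" and xi0: "c 1 = 0"
    and eta0: "\<And>x u. - c 2 * exp (- x) + c 4 - c 5 * u = 0"
    unfolding lincomb_eq vzero_def by (auto simp: fun_eq_iff)
  have "c 3 = 0" "c 5 = 0"
    using tau0[of 0] tau0[of 1] by simp_all
  moreover have "c 2 * (1 - exp (- 1)) = 0"
    using eta0[of 0 0] eta0[of 1 0] by (simp add: algebra_simps)
  then have "c 2 = 0"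
    by simp
  moreover have "c 4 = 0"
    using eta0[of 0 0] \<open>c 2 = 0\<close> by simp
  moreover have "{1..5::nat} = {1, 2, 3, 4, 5}"
    by auto
  ultimately show "\<forall>i\<in>{1..5}. c i = 0"
    using xi0 by simp
next
  assume "\<forall>i\<in>{1..5}. c i = 0"
  then show "lincomb c = vzero"
    by (simp add: lincomb_eq vzero_def)
qed

lemma brackets_X:
  "bracket (X 1) (X 2) = X 2 \<and> bracket (X 2) (X 5) = vneg (X 2)
    \<and> bracket (X 3) (X 5) = X 3 \<and> bracket (X 4) (X 5) = vneg (X 4)
    \<and> bracket (X 1) (X 3) = vzero \<and> bracket (X 1) (X 4) = vzero
    \<and> bracket (X 1) (X 5) = vzero \<and> bracket (X 2) (X 3) = vzero
    \<and> bracket (X 2) (X 4) = vzero \<and> bracket (X 3) (X 4) = vzero"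
proof -
  have "pt (\<lambda>t x u. t) = (\<lambda>t x u. 1)" "px (\<lambda>t x u. t) = (\<lambda>t x u. 0)"
    "pu (\<lambda>t x u. t) = (\<lambda>t x u. 0)" "pt (\<lambda>t x u. - u) = (\<lambda>t x u. 0)"
    "px (\<lambda>t x u. - u) = (\<lambda>t x u. 0)" "pu (\<lambda>t x u. - u) = (\<lambda>t x u. - 1)"
    "pt (\<lambda>t x u. - exp (- x)) = (\<lambda>t x u. 0)" "px (\<lambda>t x u. - exp (- x)) = (\<lambda>t x u. exp (- x))"
    "pu (\<lambda>t x u. - exp (- x)) = (\<lambda>t x u. 0)"
    by (auto simp: pt_def px_def pu_def fun_eq_iff intro!: DERIV_imp_deriv derivative_eq_intros)
  then show ?thesis
    by (simp add: bracket_def vapp_def X_def vzero_def vneg_def fun_eq_iff)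
qed

definition affine_exp :: "real \<Rightarrow> real \<Rightarrow> real \<Rightarrow> real \<Rightarrow> fn3" where
  "affine_exp a b g d = (\<lambda>t x u. a + b * t + g * u + d * exp (- x))"

lemma partials3_affine_exp: "h \<in> partials3 (affine_exp a b g d) \<Longrightarrow> \<exists>a b g d. h = affine_exp a b g d"
proof (induction h rule: partials3.induct)
  case (2 h)
  then obtain a b g d where "h = affine_exp a b g d"
    by blast
  then have "pt h = affine_exp b 0 0 0"
    unfolding pt_def affine_exp_def by (intro ext DERIV_imp_deriv) (auto intro!: derivative_eq_intros)
  then show ?case
    by blast
next
  case (3 h)
  then obtain a b g d where "h = affine_exp a b g d"
    by blast
  then have "px h = affine_exp 0 0 0 (- d)"
    unfolding px_def affine_exp_def by (intro ext DERIV_imp_deriv) (auto intro!: derivative_eq_intros)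
  then show ?case
    by blast
next
  case (4 h)
  then obtain a b g d where "h = affine_exp a b g d"
    by blast
  then have "pu h = affine_exp g 0 0 0"
    unfolding pu_def affine_exp_def by (intro ext DERIV_imp_deriv) (auto intro!: derivative_eq_intros)
  then show ?case
    by blast
qed blast

lemma smooth3_affine_exp: "smooth3 (affine_exp a b g d)"
  unfolding smooth3_def
proof
  fix h
  assume "h \<in> partials3 (affine_exp a b g d)"
  then obtain a b g d where h: "h = affine_exp a b g d"
    using partials3_affine_exp by blast
  have "(\<lambda>x::real. exp (- x)) differentiable at y" for y
    unfolding real_differentiable_def by (rule exI) (auto intro!: derivative_eq_intros)
  then show "continuous_on UNIV (\<lambda>(t, x, u). h t x u) \<and>
      (\<forall>t x u. (\<lambda>s. h s x u) differentiable at t \<and> (\<lambda>s. h t s u) differentiable at x \<and>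
               (\<lambda>s. h t x s) differentiable at u)"
    unfolding h affine_exp_def
    by (auto intro!: continuous_intros derivative_intros simp: case_prod_unfold)
qed

lemma smooth_vf_lincomb: "smooth_vf (lincomb c)"
proof -
  have "lincomb c = VF (affine_exp (c 3) (c 5) 0 0) (affine_exp (- c 1) 0 0 0)
                       (affine_exp (c 4) 0 (- c 5) (- c 2))"
    unfolding lincomb_eq affine_exp_def by (simp add: fun_eq_iff algebra_simps)
  then show ?thesis
    by (simp add: smooth_vf_def smooth3_affine_exp)
qed

section \<open>Soundness\<close>

lemma DERIV_partials2:
  assumes "smooth2 U" "g \<in> partials2 U"
  shows "((\<lambda>s. g s x) has_real_derivative dt g t x) (at t)"
    and "((\<lambda>s. g t s) has_real_derivative dx g t x) (at x)"
  using assms unfolding smooth2_def dt_def dx_def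
  by (auto simp: DERIV_deriv_iff_real_differentiable)

lemma dt_eqI: "((\<lambda>s. F s x) has_real_derivative D) (at t) \<Longrightarrow> dt F t x = D"
  by (simp add: dt_def DERIV_imp_deriv)

lemma dx_eqI: "((\<lambda>s. F t s) has_real_derivative D) (at x) \<Longrightarrow> dx F t x = D"
  by (simp add: dx_def DERIV_imp_deriv)

lemma prolF_lincomb:
  assumes U: "smooth2 U"
  shows "prolF (lincomb c) U t x = - 2 * c 5 * (dt U t x + (dx U t x + dx (dx U) t x)\<^sup>2)"
proof -
  have in_partials: "U \<in> partials2 U" "dt U \<in> partials2 U" "dx U \<in> partials2 U"
    "dx (dt U) \<in> partials2 U" "dx (dx U) \<in> partials2 U"
    by (blast intro: partials2.intros)+
  note dT = in_partials(1,2,3)[THEN DERIV_partials2(1)[OF U]]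
  note dX = in_partials[THEN DERIV_partials2(2)[OF U]]
  have char: "charQ (lincomb c) U = (\<lambda>t x. c 4 - c 2 * exp (- x) - c 5 * U t x
      - (c 3 + c 5 * t) * dt U t x + c 1 * dx U t x)"
    unfolding charQ_def lincomb_eq by (simp add: fun_eq_iff algebra_simps)
  have char_t: "dt (charQ (lincomb c) U) t x = - c 5 * dt U t x
      - (c 5 * dt U t x + (c 3 + c 5 * t) * dt (dt U) t x) + c 1 * dt (dx U) t x"
    unfolding char by (rule dt_eqI) (auto intro!: derivative_eq_intros dT)
  have char_x: "dx (charQ (lincomb c) U) t = (\<lambda>x. c 2 * exp (- x) - c 5 * dx U t x
      - (c 3 + c 5 * t) * dx (dt U) t x + c 1 * dx (dx U) t x)"
    unfolding char by (rule ext, rule dx_eqI) (auto intro!: derivative_eq_intros dX)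
  have char_xx: "dx (dx (charQ (lincomb c) U)) t x = - c 2 * exp (- x) - c 5 * dx (dx U) t x
      - (c 3 + c 5 * t) * dx (dx (dt U)) t x + c 1 * dx (dx (dx U)) t x"
    by (rule dx_eqI) (unfold char_x, auto intro!: derivative_eq_intros dX)
  show ?thesis
    unfolding prolF_def etaT_def etaX_def etaXX_def char_t char_xx char_x[THEN fun_cong]
    by (simp add: lincomb_eq algebra_simps power2_eq_square)
qed

lemma is_sym_lincomb: "is_sym (lincomb c)"
  using smooth_vf_lincomb prolF_lincomb unfolding is_sym_def smooth_vf_def eqn_def by simp

section \<open>Prolongation along quadratic solutions\<close>

definition quadratic_jet :: "real \<Rightarrow> real \<Rightarrow> real \<Rightarrow> real \<Rightarrow> real \<Rightarrow> real \<Rightarrow> real \<Rightarrow> fn2" where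
  "quadratic_jet t0 x0 a b c e f =
     (\<lambda>t x. a + b * (t - t0) + c * (x - x0) + e * (t - t0) * (x - x0) + f * (x - x0)\<^sup>2)"

lemma dt_quadratic_jet: "dt (quadratic_jet t0 x0 a b c e f) = quadratic_jet t0 x0 b 0 e 0 0"
  unfolding dt_def quadratic_jet_def
  by (intro ext DERIV_imp_deriv) (auto intro!: derivative_eq_intros simp: algebra_simps)

lemma dx_quadratic_jet: "dx (quadratic_jet t0 x0 a b c e f) = quadratic_jet t0 x0 c e (2 * f) 0 0"
  unfolding dx_def quadratic_jet_def
  by (intro ext DERIV_imp_deriv) (auto intro!: derivative_eq_intros simp: algebra_simps)

lemma smooth2_quadratic_jet: "smooth2 (quadratic_jet t0 x0 a b c e f)"
proof -
  have "\<exists>a b c e f. g = quadratic_jet t0 x0 a b c e f"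
    if "g \<in> partials2 (quadratic_jet t0 x0 a b c e f)" for g
    using that
    by (induction g rule: partials2.induct) (blast | force simp: dt_quadratic_jet dx_quadratic_jet)+
  then show ?thesis
    unfolding smooth2_def quadratic_jet_def
    by (fastforce intro!: continuous_intros derivative_intros simp: case_prod_unfold)
qed

lemma dt_charQ_quadratic_jet:
  assumes Q: "smooth_vf Q"
  shows "dt (charQ Q (quadratic_jet t0 x0 u0 p q w f)) t0 x0 =
    pt (eta Q) t0 x0 u0 + pu (eta Q) t0 x0 u0 * p
    - (pt (tau Q) t0 x0 u0 + pu (tau Q) t0 x0 u0 * p) * p
    - ((pt (xi Q) t0 x0 u0 + pu (xi Q) t0 x0 u0 * p) * q + xi Q t0 x0 u0 * w)"
proof -
  define c where "c s = u0 + p * (s - t0)" for s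
  have c: "(c has_real_derivative p) (at t0)" "c t0 = u0"
    unfolding c_def by (auto intro!: derivative_eq_intros)
  have "(\<lambda>s. charQ Q (quadratic_jet t0 x0 u0 p q w f) s x0) =
      (\<lambda>s. eta Q s x0 (c s) - tau Q s x0 (c s) * p - xi Q s x0 (c s) * (q + w * (s - t0)))"
    unfolding charQ_def dt_quadratic_jet dx_quadratic_jet by (simp add: quadratic_jet_def c_def fun_eq_iff)
  moreover have "((\<lambda>s. eta Q s x0 (c s) - tau Q s x0 (c s) * p - xi Q s x0 (c s) * (q + w * (s - t0)))
      has_real_derivative
        pt (eta Q) t0 x0 u0 + pu (eta Q) t0 x0 u0 * p
        - (pt (tau Q) t0 x0 u0 + pu (tau Q) t0 x0 u0 * p) * p
        - ((pt (xi Q) t0 x0 u0 + pu (xi Q) t0 x0 u0 * p) * q + xi Q t0 x0 u0 * w)) (at t0)"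
    using Q unfolding smooth_vf_def
    by (auto intro!: derivative_eq_intros DERIV_along_curve_t[OF _ c(1), unfolded c(2)]
        simp: algebra_simps c(2))
  ultimately show ?thesis
    unfolding dt_def by (simp add: DERIV_imp_deriv)
qed

lemma dx_charQ_quadratic_jet:
  fixes u0 q r x0 :: real
  assumes Q: "smooth_vf Q"
  defines "c \<equiv> \<lambda>s. u0 + q * (s - x0) + r * (s - x0)\<^sup>2 / 2"
    and "c' \<equiv> \<lambda>s. q + r * (s - x0)"
  shows "dx (charQ Q (quadratic_jet t0 x0 u0 p q w (r / 2))) t0 x =
    px (eta Q) t0 x (c x) + pu (eta Q) t0 x (c x) * c' x
    - ((px (tau Q) t0 x (c x) + pu (tau Q) t0 x (c x) * c' x) * (p + w * (x - x0)) + tau Q t0 x (c x) * w)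
    - ((px (xi Q) t0 x (c x) + pu (xi Q) t0 x (c x) * c' x) * c' x + xi Q t0 x (c x) * r)"
proof -
  have c: "(c has_real_derivative c' x) (at x)" and c': "(c' has_real_derivative r) (at x)"
    unfolding c_def c'_def by (auto intro!: derivative_eq_intros simp: field_simps)
  have "(\<lambda>s. charQ Q (quadratic_jet t0 x0 u0 p q w (r / 2)) t0 s) =
      (\<lambda>s. eta Q t0 s (c s) - tau Q t0 s (c s) * (p + w * (s - x0)) - xi Q t0 s (c s) * c' s)"
    unfolding charQ_def dt_quadratic_jet dx_quadratic_jet
    by (simp add: quadratic_jet_def c_def c'_def fun_eq_iff)
  moreover have "((\<lambda>s. eta Q t0 s (c s) - tau Q t0 s (c s) * (p + w * (s - x0)) - xi Q t0 s (c s) * c' s)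
      has_real_derivative
        px (eta Q) t0 x (c x) + pu (eta Q) t0 x (c x) * c' x
        - ((px (tau Q) t0 x (c x) + pu (tau Q) t0 x (c x) * c' x) * (p + w * (x - x0))
           + tau Q t0 x (c x) * w)
        - ((px (xi Q) t0 x (c x) + pu (xi Q) t0 x (c x) * c' x) * c' x + xi Q t0 x (c x) * r)) (at x)"
    using Q unfolding smooth_vf_def
    by (auto intro!: derivative_eq_intros DERIV_along_curve_x[OF _ c] c' simp: algebra_simps)
  ultimately show ?thesis
    unfolding dx_def by (simp add: DERIV_imp_deriv)
qed

lemma dxx_charQ_quadratic_jet:
  assumes Q: "smooth_vf Q"
  shows "dx (dx (charQ Q (quadratic_jet t0 x0 u0 p q w (r / 2)))) t0 x0 =
    px (px (eta Q)) t0 x0 u0 + pu (px (eta Q)) t0 x0 u0 * q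
      + (px (pu (eta Q)) t0 x0 u0 + pu (pu (eta Q)) t0 x0 u0 * q) * q + pu (eta Q) t0 x0 u0 * r
    - ((px (px (tau Q)) t0 x0 u0 + pu (px (tau Q)) t0 x0 u0 * q
        + (px (pu (tau Q)) t0 x0 u0 + pu (pu (tau Q)) t0 x0 u0 * q) * q + pu (tau Q) t0 x0 u0 * r) * p
       + 2 * (px (tau Q) t0 x0 u0 + pu (tau Q) t0 x0 u0 * q) * w)
    - ((px (px (xi Q)) t0 x0 u0 + pu (px (xi Q)) t0 x0 u0 * q
        + (px (pu (xi Q)) t0 x0 u0 + pu (pu (xi Q)) t0 x0 u0 * q) * q + pu (xi Q) t0 x0 u0 * r) * q
       + 2 * (px (xi Q) t0 x0 u0 + pu (xi Q) t0 x0 u0 * q) * r)"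
proof -
  define c where "c s = u0 + q * (s - x0) + r * (s - x0)\<^sup>2 / 2" for s
  define c' where "c' s = q + r * (s - x0)" for s
  have c: "(c has_real_derivative c' x0) (at x0)" and c': "(c' has_real_derivative r) (at x0)"
    unfolding c_def c'_def by (auto intro!: derivative_eq_intros simp: field_simps)
  have c0: "c x0 = u0" "c' x0 = q"
    by (simp_all add: c_def c'_def)
  have smooth: "smooth3 (tau Q)" "smooth3 (xi Q)" "smooth3 (eta Q)"
    using Q by (simp_all add: smooth_vf_def)
  note along = DERIV_along_curve_x[OF _ c, unfolded c0]
  note along_partials = along[OF smooth(1)] along[OF smooth(2)] along[OF smooth(3)]
    along[OF smooth3_px[OF smooth(1)]] along[OF smooth3_px[OF smooth(2)]] along[OF smooth3_px[OF smooth(3)]]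
    along[OF smooth3_pu[OF smooth(1)]] along[OF smooth3_pu[OF smooth(2)]] along[OF smooth3_pu[OF smooth(3)]]
  have "((\<lambda>x. dx (charQ Q (quadratic_jet t0 x0 u0 p q w (r / 2))) t0 x) has_real_derivative
    px (px (eta Q)) t0 x0 u0 + pu (px (eta Q)) t0 x0 u0 * q
      + (px (pu (eta Q)) t0 x0 u0 + pu (pu (eta Q)) t0 x0 u0 * q) * q + pu (eta Q) t0 x0 u0 * r
    - ((px (px (tau Q)) t0 x0 u0 + pu (px (tau Q)) t0 x0 u0 * q
        + (px (pu (tau Q)) t0 x0 u0 + pu (pu (tau Q)) t0 x0 u0 * q) * q + pu (tau Q) t0 x0 u0 * r) * p
       + 2 * (px (tau Q) t0 x0 u0 + pu (tau Q) t0 x0 u0 * q) * w)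
    - ((px (px (xi Q)) t0 x0 u0 + pu (px (xi Q)) t0 x0 u0 * q
        + (px (pu (xi Q)) t0 x0 u0 + pu (pu (xi Q)) t0 x0 u0 * q) * q + pu (xi Q) t0 x0 u0 * r) * q
       + 2 * (px (xi Q) t0 x0 u0 + pu (xi Q) t0 x0 u0 * q) * r)) (at x0)"
    unfolding dx_charQ_quadratic_jet[OF Q] c_def[symmetric] c'_def[symmetric]
    by (auto intro!: derivative_eq_intros along_partials c' simp: algebra_simps c0)
  then show ?thesis
    unfolding dx_def[of "dx _"] by (rule DERIV_imp_deriv)
qed

text \<open>
  The jet \<open>(u, u\<^sub>t, u\<^sub>x, u\<^sub>x\<^sub>x, u\<^sub>t\<^sub>x) = (u, -(q + r)\<^sup>2, q, r, w)\<close> is a general point of the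
  solution manifold; the remaining second derivative \<open>u\<^sub>t\<^sub>t\<close> does not enter \<open>pr\<^sup>(\<^sup>2\<^sup>) Q F\<close>.
\<close>

definition jet_solution :: "real \<Rightarrow> real \<Rightarrow> real \<Rightarrow> real \<Rightarrow> real \<Rightarrow> real \<Rightarrow> fn2" where
  "jet_solution t x u q r w = quadratic_jet t x u (- (q + r)\<^sup>2) q w (r / 2)"

definition determining_polynomial :: "vf \<Rightarrow> real \<Rightarrow> real \<Rightarrow> real \<Rightarrow> real \<Rightarrow> real \<Rightarrow> real \<Rightarrow> real" where
  "determining_polynomial Q t x u q r w =
    (let p = - (q + r)\<^sup>2;
         Dt = (\<lambda>f. pt f t x u + pu f t x u * p);
         Dx = (\<lambda>f. px f t x u + pu f t x u * q);
         Dxx = (\<lambda>f. px (px f) t x u + pu (px f) t x u * q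
                    + (px (pu f) t x u + pu (pu f) t x u * q) * q + pu f t x u * r);
         \<eta>t = Dt (eta Q) - Dt (tau Q) * p - Dt (xi Q) * q;
         \<eta>x = Dx (eta Q) - Dx (tau Q) * p - Dx (xi Q) * q;
         \<eta>xx = Dxx (eta Q) - Dxx (tau Q) * p - 2 * Dx (tau Q) * w - Dxx (xi Q) * q - 2 * Dx (xi Q) * r
     in \<eta>t + 2 * (q + r) * (\<eta>x + \<eta>xx))"

lemma eqn_jet_solution: "eqn (jet_solution t x u q r w) t x"
  unfolding eqn_def jet_solution_def dt_quadratic_jet dx_quadratic_jet
  by (simp add: quadratic_jet_def)

lemma prolF_jet_solution:
  assumes "smooth_vf Q"
  shows "prolF Q (jet_solution t x u q r w) t x = determining_polynomial Q t x u q r w"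
proof -
  have "quadratic_jet t x u (- (q + r)\<^sup>2) q w (r / 2) t x = u"
    by (simp add: quadratic_jet_def)
  then show ?thesis
    unfolding prolF_def etaT_def etaX_def etaXX_def jet_solution_def
      dt_charQ_quadratic_jet[OF assms] dx_charQ_quadratic_jet[OF assms]
      dxx_charQ_quadratic_jet[OF assms] dt_quadratic_jet dx_quadratic_jet
    by (simp add: quadratic_jet_def determining_polynomial_def Let_def algebra_simps)
qed

section \<open>Solving the determining equations\<close>

locale determining_system =
  fixes Q :: vf
  assumes smooth: "smooth_vf Q"
    and tau_x: "px (tau Q) t x u = 0" and tau_u: "pu (tau Q) t x u = 0"
    and xi_t: "pt (xi Q) t x u = 0" and xi_u: "pu (xi Q) t x u = 0"
    and eta_t: "pt (eta Q) t x u = 0"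
    and eta_u: "pu (eta Q) t x u + pt (tau Q) t x u = 4 * px (xi Q) t x u"
    and eta_x: "px (eta Q) t x u + px (px (eta Q)) t x u = 0"
    and xi_xx: "px (xi Q) t x u + pu (px (eta Q)) t x u + px (pu (eta Q)) t x u = px (px (xi Q)) t x u"
begin

lemma smooth_tau: "smooth3 (tau Q)" and smooth_xi: "smooth3 (xi Q)" and smooth_eta: "smooth3 (eta Q)"
  using smooth by (simp_all add: smooth_vf_def)

lemma tau_eq: "tau Q t x u = tau Q t 0 0"
  using px_zero_imp_eq[OF smooth_tau tau_x] pu_zero_imp_eq[OF smooth_tau tau_u] by metis

lemma xi_eq: "xi Q t x u = xi Q 0 x 0"
  using pt_zero_imp_eq[OF smooth_xi xi_t] pu_zero_imp_eq[OF smooth_xi xi_u] by metis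

lemma eta_eq: "eta Q t x u = eta Q 0 x u"
  using pt_zero_imp_eq[OF smooth_eta eta_t] by metis

lemma px_xi_eq: "px (xi Q) t x u = px (xi Q) 0 x 0"
  using px_of_x_only xi_eq by blast

lemma pt_tau_eq: "pt (tau Q) t x u = pt (tau Q) 0 0 0"
proof -
  have "pt (tau Q) t x u = pt (tau Q) t 0 0"
    using tau_eq[of _ x u] by (simp add: pt_def)
  moreover have "eta Q t 0 = eta Q 0 0"
    by (rule ext) (rule eta_eq)
  then have "pu (eta Q) t 0 0 = pu (eta Q) 0 0 0"
    by (simp add: pu_def)
  ultimately show ?thesis
    using eta_u[of t 0 0] eta_u[of 0 0 0] px_xi_eq[of t 0 0] by simp
qed

lemma tau_affine: "tau Q t x u = tau Q 0 0 0 + pt (tau Q) 0 0 0 * t"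
proof -
  have "((\<lambda>s. tau Q s 0 0 - pt (tau Q) 0 0 0 * s) has_real_derivative 0) (at s)" for s
    using DERIV_pt[OF smooth_tau, of 0 0 s] pt_tau_eq[of s 0 0]
    by (auto intro!: derivative_eq_intros)
  from DERIV_isconst_all[OF allI[OF this], of t 0] show ?thesis
    using tau_eq[of t x u] by simp
qed

lemma pu_eta: "pu (eta Q) t x u = 4 * px (xi Q) 0 x 0 - pt (tau Q) 0 0 0"
  using eta_u[of t x u] px_xi_eq[of t x u] pt_tau_eq[of t x u] by simp

lemma eta_affine_in_u: "eta Q t x u = eta Q 0 x 0 + (4 * px (xi Q) 0 x 0 - pt (tau Q) 0 0 0) * u"
proof -
  have "((\<lambda>s. eta Q 0 x s - (4 * px (xi Q) 0 x 0 - pt (tau Q) 0 0 0) * s) has_real_derivative 0) (at s)"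
    for s
    using DERIV_pu[OF smooth_eta, of 0 x s] pu_eta[of 0 x s]
    by (auto intro!: derivative_eq_intros)
  from DERIV_isconst_all[OF allI[OF this], of u 0] show ?thesis
    using eta_eq[of t x u] by simp
qed

lemma px_eta: "px (eta Q) t x u = px (eta Q) 0 x 0 + 4 * px (px (xi Q)) 0 x 0 * u"
proof -
  have "((\<lambda>s. 4 * px (xi Q) 0 s 0 - pt (tau Q) 0 0 0) has_real_derivative 4 * px (px (xi Q)) 0 x 0) (at x)"
    for x
    by (auto intro!: derivative_eq_intros DERIV_px[OF smooth3_px[OF smooth_xi]])
  from partials_affine_in_u(1)[where f = "eta Q" and g = "\<lambda>x. eta Q 0 x 0"
      and h = "\<lambda>x. 4 * px (xi Q) 0 x 0 - pt (tau Q) 0 0 0",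
      OF eta_affine_in_u DERIV_px[OF smooth_eta] this]
  show ?thesis .
qed

lemma pxx_eta: "px (px (eta Q)) t x u = px (px (eta Q)) 0 x 0 + 4 * px (px (px (xi Q))) 0 x 0 * u"
  and pu_px_eta: "pu (px (eta Q)) t x u = 4 * px (px (xi Q)) 0 x 0"
proof -
  have "((\<lambda>s. 4 * px (px (xi Q)) 0 s 0) has_real_derivative 4 * px (px (px (xi Q))) 0 x 0) (at x)" for x
    by (auto intro!: derivative_eq_intros DERIV_px[OF smooth3_px[OF smooth3_px[OF smooth_xi]]])
  note affine = partials_affine_in_u[where f = "px (eta Q)" and g = "\<lambda>x. px (eta Q) 0 x 0"
      and h = "\<lambda>x. 4 * px (px (xi Q)) 0 x 0", OF px_eta DERIV_px[OF smooth3_px[OF smooth_eta]] this]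
  show "px (px (eta Q)) t x u = px (px (eta Q)) 0 x 0 + 4 * px (px (px (xi Q))) 0 x 0 * u"
    by (rule affine(1))
  show "pu (px (eta Q)) t x u = 4 * px (px (xi Q)) 0 x 0"
    by (rule affine(2))
qed

lemma px_pu_eta: "px (pu (eta Q)) t x u = 4 * px (px (xi Q)) 0 x 0"
proof -
  have "pu (eta Q) t x u = (4 * px (xi Q) 0 x 0 - pt (tau Q) 0 0 0) + 0 * u" for t x u
    using pu_eta by simp
  moreover have "((\<lambda>s. 4 * px (xi Q) 0 s 0 - pt (tau Q) 0 0 0) has_real_derivative
      4 * px (px (xi Q)) 0 x 0) (at x)" for x
    by (auto intro!: derivative_eq_intros DERIV_px[OF smooth3_px[OF smooth_xi]])
  ultimately have "px (pu (eta Q)) t x u = 4 * px (px (xi Q)) 0 x 0 + 0 * u"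
    by (rule partials_affine_in_u(1)[where f = "pu (eta Q)" and h = "\<lambda>_. 0", OF _ _ DERIV_const])
  then show ?thesis
    by simp
qed

text \<open>
  With \<open>y = \<xi>\<^sub>x\<close>, the remaining equations say \<open>y + 7 y' = 0\<close> and (comparing the
  coefficients of \<open>u\<close> in \<open>\<eta>\<^sub>x + \<eta>\<^sub>x\<^sub>x = 0\<close>) \<open>y' + y'' = 0\<close>; differentiating
  the first one forces \<open>y = 0\<close>.
\<close>

lemma px_xi_zero: "px (xi Q) t x u = 0"
proof -
  define y y' y'' where "y x = px (xi Q) 0 x 0" and "y' x = px (px (xi Q)) 0 x 0"
    and "y'' x = px (px (px (xi Q))) 0 x 0" for x
  have dy: "(y has_real_derivative y' x) (at x)" and dy': "(y' has_real_derivative y'' x) (at x)" for x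
    unfolding y_def[abs_def] y'_def[abs_def] y''_def
    by (rule DERIV_px[OF smooth3_px[OF smooth_xi]] DERIV_px[OF smooth3_px[OF smooth3_px[OF smooth_xi]]])+
  have first: "y x + 7 * y' x = 0" for x
    using xi_xx[of 0 x 0] unfolding pu_px_eta px_pu_eta y_def y'_def by simp
  have second: "y' x + y'' x = 0" for x
    using eta_x[of 0 x 0] eta_x[of 0 x 1] px_eta[of 0 x 1] pxx_eta[of 0 x 1]
    unfolding y'_def y''_def by simp
  have "((\<lambda>x. y x + 7 * y' x) has_real_derivative y' x + 7 * y'' x) (at x)"
    by (auto intro!: derivative_eq_intros dy dy')
  then have "y' x + 7 * y'' x = 0"
    unfolding first by (rule DERIV_unique) simp
  then have "y x = 0"
    using first[of x] second[of x] by simp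
  then show ?thesis
    using px_xi_eq[of t x u] by (simp add: y_def)
qed

lemma xi_const: "xi Q t x u = xi Q 0 0 0"
  using xi_eq[of t x u] px_zero_imp_eq[where t = 0 and u = 0 and x = x and x' = 0, OF smooth_xi px_xi_zero]
  by simp

lemma eta_eq_exp: "eta Q t x u = eta Q 0 0 0 + px (eta Q) 0 0 0 * (1 - exp (- x)) - pt (tau Q) 0 0 0 * u"
proof -
  have "((\<lambda>s. px (eta Q) 0 s 0) has_real_derivative - px (eta Q) 0 x 0) (at x)" for x
    using DERIV_px[OF smooth3_px[OF smooth_eta], where t = 0 and u = 0 and x = x] eta_x[of 0 x 0]
    by (simp add: add_eq_0_iff)
  from DERIV_neg_self_imp_exp[OF DERIV_px[OF smooth_eta] this, of x] show ?thesis
    using eta_affine_in_u[of t x u] px_xi_zero[of 0 x 0] by simp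
qed

lemma is_lincomb: "\<exists>c. Q = lincomb c"
proof
  let ?c = "\<lambda>i. if i = 1 then - xi Q 0 0 0 else if i = 2 then px (eta Q) 0 0 0
    else if i = 3 then tau Q 0 0 0 else if i = 4 then eta Q 0 0 0 + px (eta Q) 0 0 0
    else pt (tau Q) 0 0 0"
  show "Q = lincomb ?c"
  proof (rule vf.expand, intro conjI ext)
    fix t x u
    show "tau Q t x u = tau (lincomb ?c) t x u"
      using tau_affine[of t x u] by (simp add: lincomb_eq)
    show "xi Q t x u = xi (lincomb ?c) t x u"
      using xi_const[of t x u] by (simp add: lincomb_eq)
    show "eta Q t x u = eta (lincomb ?c) t x u"
      using eta_eq_exp[of t x u] by (simp add: lincomb_eq algebra_simps)
  qed
qed

end

lemma determining_system_if_polynomial_vanishes: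
  assumes Q: "smooth_vf Q" and P: "\<And>t x u q r w. determining_polynomial Q t x u q r w = 0"
  shows "determining_system Q"
proof -
  have tau_xu: "px (tau Q) t x u = 0 \<and> pu (tau Q) t x u = 0" for t x u
    using P[of t x u 0 1 1] P[of t x u 0 1 0] P[of t x u 1 0 1] P[of t x u 1 0 0]
    by (simp add: determining_polynomial_def Let_def algebra_simps)
  then have "px (tau Q) = (\<lambda>_ _ _. 0)" "pu (tau Q) = (\<lambda>_ _ _. 0)"
    by (auto simp: fun_eq_iff)
  then have "pt (eta Q) t x u = 0 \<and> pt (xi Q) t x u = 0 \<and> pu (xi Q) t x u = 0
      \<and> px (eta Q) t x u + px (px (eta Q)) t x u = 0
      \<and> pu (eta Q) t x u + pt (tau Q) t x u = 4 * px (xi Q) t x u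
      \<and> px (xi Q) t x u + pu (px (eta Q)) t x u + px (pu (eta Q)) t x u = px (px (xi Q)) t x u"
    for t x u
    using P[of t x u 0 0 0] P[of t x u 1 "-1" 0] P[of t x u 0 1 0] P[of t x u 0 "-1" 0]
      P[of t x u 1 0 0] P[of t x u 1 "-2" 0] P[of t x u "-1" 2 0] P[of t x u "-1" 0 0]
      P[of t x u 2 "-1" 0]
    by (simp add: determining_polynomial_def Let_def algebra_simps)
  with Q tau_xu show ?thesis
    by unfold_locales auto
qed

lemma is_sym_imp_lincomb:
  assumes sym: "is_sym Q"
  shows "\<exists>c. Q = lincomb c"
proof -
  have Q: "smooth_vf Q"
    using sym by (simp add: is_sym_def smooth_vf_def)
  have "prolF Q (jet_solution t x u q r w) t x = 0" for t x u q r w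
    using sym eqn_jet_solution smooth2_quadratic_jet unfolding is_sym_def jet_solution_def by blast
  then have "determining_polynomial Q t x u q r w = 0" for t x u q r w
    by (simp add: prolF_jet_solution[OF Q])
  then interpret determining_system Q
    by (rule determining_system_if_polynomial_vanishes[OF Q])
  show ?thesis
    by (rule is_lincomb)
qed

theorem mainTheorem2:
  shows "(\<forall>Q. is_sym Q \<longleftrightarrow> (\<exists>c. Q = lincomb c))
    \<and> (\<forall>c. lincomb c = vzero \<longrightarrow> (\<forall>i\<in>{1..5}. c i = 0))
    \<and> bracket (X 1) (X 2) = X 2
    \<and> bracket (X 2) (X 5) = vneg (X 2)
    \<and> bracket (X 3) (X 5) = X 3
    \<and> bracket (X 4) (X 5) = vneg (X 4)
    \<and> bracket (X 1) (X 3) = vzero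
    \<and> bracket (X 1) (X 4) = vzero
    \<and> bracket (X 1) (X 5) = vzero
    \<and> bracket (X 2) (X 3) = vzero
    \<and> bracket (X 2) (X 4) = vzero
    \<and> bracket (X 3) (X 4) = vzero"
  using is_sym_imp_lincomb is_sym_lincomb lincomb_eq_vzero_iff brackets_X by blast

end
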